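(* Assume $S\times M\neq\emptyset$, let $(x,\lambda):[t_0,+\infty[\ \to X\times Y$ be a solution of (AHT), for each $t\ge t_0$ let $(x_t,\lambda_t)$ be the unique zero of $T_t=T+\varepsilon(t)\mathrm{id}$, and suppose $\varepsilon$ is decreasing and there exists $t_+\ge t_0$ such that $\varepsilon^2(t)+\dot\varepsilon(t)\ge0$ and $2\varepsilon(t)\dot\varepsilon(t)+\ddot\varepsilon(t)\le0$ for all $t\ge t_+$. Then \[ \limsup_{t\to+\infty}e^{-\rho(t)}\int_{t_+}^t e^{\rho(\tau)}\frac{1}{\varepsilon(\tau)}\|(\dot x(\tau),\dot\lambda(\tau))+\varepsilon(\tau)((x(\tau),\lambda(\tau))-(x_\tau,\lambda_\tau))\|^2\,d\tau<+\infty, \] \[ \limsup_{t\to+\infty}e^{-\rho(t)}\int_{t_+}^t e^{\rho(\tau)}\frac{1}{\varepsilon(\tau)}\|T(x(\tau),\lambda(\tau))-T(x_\tau,\lambda_\tau)\|^2\,d\tau<+\infty. \]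
   Context: $X,Y$ are real Hilbert spaces; $X\times Y$ carries the product inner product and norm $\|\cdot\|$. Standing assumptions: $f:X\to\mathbb{R}$ is convex and continuously differentiable with $\nabla f$ Lipschitz continuous on bounded subsets of $X$; $A:X\to Y$ is linear and continuous with adjoint $A^*$; $b\in Y$; $\varepsilon:[t_0,+\infty[\ \to\ ]0,+\infty[$ ($t_0\ge0$) is twice continuously differentiable with $\lim_{t\to+\infty}\varepsilon(t)=0$. $L(x,\lambda)=f(x)+\langle\lambda,Ax-b\rangle_Y$ and $T(x,\lambda)=(\nabla f(x)+A^*\lambda,\ b-Ax)$. $S$ is the set of optimal solutions of $\min\{f(x):Ax=b\}$, $M$ the set of Lagrange multipliers; $S\times M$ is the set of saddle points of $L$, equal to the zero set of $T$. $T_t=T+\varepsilon(t)\mathrm{id}$ has a unique zero $(x_t,\lambda_t)$. $\rho(t)=\int_{t_0}^t\varepsilon(\tau)\,d\tau$. (AHT) is the system $\dot x+\nabla f(x)+A^*\lambda+\varepsilon(t)x=0$, $\dot\lambda+b-Ax+\varepsilon(t)\lambda=0$; a solution is a continuously differentiable $(x,\lambda):[t_0,+\infty[\ \to X\times Y$ satisfying it on $[t_0,+\infty[$ (existence and uniqueness for every initial datum is assumed). *)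

theory Defs
  imports "HOL-Analysis.Analysis"
begin

definition opT :: "('a::real_inner \<Rightarrow> 'a) \<Rightarrow> ('b::real_inner \<Rightarrow> 'a) \<Rightarrow> ('a \<Rightarrow> 'b) \<Rightarrow> 'b
      \<Rightarrow> 'a \<times> 'b \<Rightarrow> 'a \<times> 'b" where
  "opT gf Astar A b = (\<lambda>(x, l). (gf x + Astar l, b - A x))"

definition lagr :: "('a \<Rightarrow> real) \<Rightarrow> ('a \<Rightarrow> 'b::real_inner) \<Rightarrow> 'b \<Rightarrow> 'a \<Rightarrow> 'b \<Rightarrow> real" where
  "lagr f A b x l = f x + inner l (A x - b)"

text \<open>Saddle points of L (this set equals S x M).\<close>
definition saddle_points :: "('a \<Rightarrow> real) \<Rightarrow> ('a \<Rightarrow> 'b::real_inner) \<Rightarrow> 'b \<Rightarrow> ('a \<times> 'b) set" where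
  "saddle_points f A b = {(x, l). \<forall>y m. lagr f A b x m \<le> lagr f A b x l \<and> lagr f A b x l \<le> lagr f A b y l}"

end

theory Submission
  imports Defs
begin

(*
  Write T for the monotone operator opT and z = (x, lambda). Since T z_t = - eps z_t, the
  residual z' + eps (z - z_t) is - (T z - T z_t), and monotonicity of T gives
  ||T z - T z_t|| <= ||T z - T z_t + eps (z - z_t)|| = ||z'||. So both weighted averages stay
  bounded as soon as ||z'(t)||^2 <= C eps(t)^2, because e^rho eps integrates to at most e^rho.

  For the velocity bound, look at the increments D = z(. + h) - z. With J the increment of the
  integral of ||z||^2, the energy exp (rho r + rho (r + h)) (||D||^2 + (eps (r + h) - eps r) J)
  is nonincreasing beyond t_+: monotonicity of T controls ||D||^2, the cross term absorbs the
  leftover eps-terms, and what remains has the sign of the increment of eps^2 + eps', which is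
  nonincreasing. As trajectories are bounded and eps r - eps (r + h) <= h eps(r)^2, this gives
  ||D(t)||^2 <= h^2 (C e^(-2 rho t) + B eps(t)^2); letting h -> 0 and using that eps e^rho is
  nondecreasing (eps^2 + eps' >= 0), we get ||z'||^2 <= C' eps^2.
*)

lemma DERIV_nonpos_imp_decreasing_within:
  fixes f :: "real \<Rightarrow> real"
  assumes "a \<le> b" "{a..b} \<subseteq> S"
    and deriv: "\<And>x. x \<in> {a..b} \<Longrightarrow> (f has_real_derivative f' x) (at x within S)"
    and nonpos: "\<And>x. a < x \<Longrightarrow> x < b \<Longrightarrow> f' x \<le> 0"
  shows "f b \<le> f a"
proof -
  have deriv_Icc: "(f has_real_derivative f' x) (at x within {a..b})" if "x \<in> {a..b}" for x
    using DERIV_subset[OF deriv[OF that] assms(2)] .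
  show ?thesis
  proof (rule DERIV_nonpos_imp_decreasing_open[OF assms(1)])
    show "continuous_on {a..b} f"
      using deriv_Icc DERIV_continuous continuous_on_eq_continuous_within by blast
    fix x assume "a < x" "x < b"
    then show "\<exists>y. (f has_real_derivative y) (at x) \<and> y \<le> 0"
      using deriv_Icc[of x] nonpos[of x] by (auto simp: at_within_Icc_at)
  qed
qed

lemma exp_weighted_decreasing:
  fixes V R :: "real \<Rightarrow> real"
  assumes "a \<le> b" "{a..b} \<subseteq> S"
    and V: "\<And>x. x \<in> {a..b} \<Longrightarrow> (V has_real_derivative V' x) (at x within S)"
    and R: "\<And>x. x \<in> {a..b} \<Longrightarrow> (R has_real_derivative R' x) (at x within S)"
    and ineq: "\<And>x. a < x \<Longrightarrow> x < b \<Longrightarrow> V' x + R' x * V x \<le> 0"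
  shows "exp (R b) * V b \<le> exp (R a) * V a"
proof (rule DERIV_nonpos_imp_decreasing_within[OF assms(1,2)])
  fix x assume "x \<in> {a..b}"
  then show "((\<lambda>x. exp (R x) * V x) has_real_derivative exp (R x) * (V' x + R' x * V x)) (at x within S)"
    by (auto intro!: derivative_eq_intros V R simp: algebra_simps)
next
  fix x assume "a < x" "x < b"
  then show "exp (R x) * (V' x + R' x * V x) \<le> 0"
    using ineq by (simp add: mult_nonneg_nonpos)
qed

lemma has_vector_derivative_shift_within:
  fixes g :: "real \<Rightarrow> 'a::real_normed_vector"
  assumes "(g has_vector_derivative g') (at (x + h) within {a..})" "0 \<le> h"
  shows "((\<lambda>r. g (r + h)) has_vector_derivative g') (at x within {a..})"
proof -
  have "(g has_vector_derivative g') (at ((\<lambda>r. r + h) x) within (\<lambda>r. r + h) ` {a..})"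
    by (rule has_vector_derivative_within_subset[OF assms(1)]) (use assms(2) in auto)
  moreover have "((\<lambda>r. r + h) has_vector_derivative 1) (at x within {a..})"
    by (auto intro!: derivative_eq_intros)
  ultimately show ?thesis
    using vector_diff_chain_within by (fastforce simp: o_def)
qed

lemma has_real_derivative_shift_within:
  assumes "(g has_real_derivative g') (at (x + h) within {a..})" "0 \<le> h"
  shows "((\<lambda>r. g (r + h)) has_real_derivative g') (at x within {a..})"
  using has_vector_derivative_shift_within assms
  by (simp add: has_real_derivative_iff_has_vector_derivative)

lemma has_real_derivative_inner_self:
  fixes g :: "real \<Rightarrow> 'a::real_inner"
  assumes "(g has_vector_derivative g') (at x within S)"
  shows "((\<lambda>r. g r \<bullet> g r) has_real_derivative 2 * (g x \<bullet> g')) (at x within S)"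
proof -
  have "((\<lambda>r. g r \<bullet> g r) has_derivative (\<lambda>h. g x \<bullet> (h *\<^sub>R g') + (h *\<^sub>R g') \<bullet> g x)) (at x within S)"
    using assms unfolding has_vector_derivative_def by (intro derivative_eq_intros) auto
  then show ?thesis
    unfolding has_field_derivative_def
    by (rule has_derivative_eq_rhs) (auto simp: inner_commute algebra_simps)
qed

lemma integral_has_real_derivative_atLeast:
  assumes "continuous_on {a..} g" "a \<le> x"
  shows "((\<lambda>t. integral {a..t} g) has_real_derivative g x) (at x within {a..})"
proof -
  have "continuous_on {a..x + 1} g"
    using assms(1) by (rule continuous_on_subset) auto
  from integral_has_real_derivative[OF this] assms(2)
  have "((\<lambda>t. integral {a..t} g) has_real_derivative g x) (at x within {a..x + 1})"
    by simp
  moreover have "at x within {a..x + 1} = at x within {a..}"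
    by (rule at_within_nhd[where S = "{..<x + 1}"]) auto
  ultimately show ?thesis by simp
qed

lemma norm_vector_derivative_le_increments:
  fixes g :: "real \<Rightarrow> 'a::real_inner"
  assumes deriv: "(g has_vector_derivative g') (at t within {t<..})"
    and incr: "\<And>h. 0 < h \<Longrightarrow> h \<le> 1 \<Longrightarrow> norm (g (t + h) - g t) \<le> h * K"
  shows "norm g' \<le> K"
proof -
  have K: "0 \<le> K"
    using incr[of 1] norm_ge_zero[of "g (t + 1) - g t"] by linarith
  have "((\<lambda>s. g s \<bullet> g') has_real_derivative g' \<bullet> g') (at t within {t<..})"
    using deriv unfolding has_vector_derivative_def has_field_derivative_def
    by (auto intro!: derivative_eq_intros)
  then have lim: "((\<lambda>s. (g s \<bullet> g' - g t \<bullet> g') / (s - t)) \<longlongrightarrow> g' \<bullet> g') (at_right t)"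
    by (simp add: has_field_derivative_iff)
  have "\<forall>\<^sub>F s in at_right t. (g s \<bullet> g' - g t \<bullet> g') / (s - t) \<le> K * norm g'"
    using eventually_at_right_real[OF less_add_one[of t]]
  proof (rule eventually_mono)
    fix s assume s: "s \<in> {t<..<t + 1}"
    then have "norm (g s - g t) \<le> (s - t) * K"
      using incr[of "s - t"] by simp
    then have "(g s - g t) \<bullet> g' \<le> (s - t) * K * norm g'"
      using norm_cauchy_schwarz[of "g s - g t" g'] mult_right_mono[of _ _ "norm g'"] by force
    then show "(g s \<bullet> g' - g t \<bullet> g') / (s - t) \<le> K * norm g'"
      using s by (simp add: inner_diff_left divide_le_eq mult.commute mult.left_commute)
  qed
  from tendsto_upperbound[OF lim this trivial_limit_at_right_real]
  have "norm g' * norm g' \<le> K * norm g'"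
    by (simp add: power2_norm_eq_inner[symmetric] power2_eq_square)
  then show ?thesis
    using K by (cases "g' = 0") auto
qed

lemma norm_le_norm_add_scaleR:
  fixes u d :: "'a::real_inner"
  assumes "0 \<le> u \<bullet> d" "0 \<le> e"
  shows "norm u \<le> norm (u + e *\<^sub>R d)"
proof -
  have "(u + e *\<^sub>R d) \<bullet> (u + e *\<^sub>R d) = u \<bullet> u + 2 * e * (u \<bullet> d) + e\<^sup>2 * (d \<bullet> d)"
    by (simp add: inner_add_left inner_add_right inner_commute power2_eq_square algebra_simps)
  moreover have "0 \<le> 2 * e * (u \<bullet> d) + e\<^sup>2 * (d \<bullet> d)"
    using assms by simp
  ultimately show ?thesis
    by (simp add: norm_le)
qed

lemma inner_diff_scaleR_diff:
  fixes x y :: "'a::real_inner"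
  shows "2 * ((y - x) \<bullet> (b *\<^sub>R y - a *\<^sub>R x)) = (a + b) * ((y - x) \<bullet> (y - x)) + (b - a) * (y \<bullet> y - x \<bullet> x)"
  by (simp add: inner_diff_left inner_diff_right inner_commute algebra_simps)

lemma Limsup_less_infinity_if_eventually_le:
  assumes "\<forall>\<^sub>F t in F. f t \<le> C"
  shows "Limsup F (\<lambda>t. ereal (f t)) < \<infinity>"
proof -
  have "Limsup F (\<lambda>t. ereal (f t)) \<le> ereal C"
    by (rule Limsup_bounded) (use assms in \<open>auto elim: eventually_mono\<close>)
  then show ?thesis
    using order.strict_trans1 by fastforce
qed

lemma convex_on_gradient_inequality:
  fixes f :: "'a::real_inner \<Rightarrow> real"
  assumes cvx: "convex_on UNIV f"
    and grad: "\<And>x. (f has_derivative (\<lambda>h. gf x \<bullet> h)) (at x)"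
  shows "f x + gf x \<bullet> (y - x) \<le> f y"
proof -
  define g where "g s = f (x + s *\<^sub>R (y - x))" for s :: real
  have "convex_on UNIV g"
  proof (rule convex_onI)
    fix t a c :: real assume t: "0 < t" "t < 1"
    have "x + ((1 - t) *\<^sub>R a + t *\<^sub>R c) *\<^sub>R (y - x)
        = (1 - t) *\<^sub>R (x + a *\<^sub>R (y - x)) + t *\<^sub>R (x + c *\<^sub>R (y - x))"
      by (simp add: algebra_simps)
    then show "g ((1 - t) *\<^sub>R a + t *\<^sub>R c) \<le> (1 - t) * g a + t * g c"
      unfolding g_def using convex_onD[OF cvx, of t] t by auto
  qed auto
  moreover have "(g has_real_derivative gf x \<bullet> (y - x)) (at 0)"
  proof -
    have "((\<lambda>s. x + s *\<^sub>R (y - x)) has_derivative (\<lambda>s. s *\<^sub>R (y - x))) (at 0)"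
      by (auto intro!: derivative_eq_intros)
    from diff_chain_at[OF this, of f "\<lambda>h. gf x \<bullet> h"] grad[of x]
    have "(g has_derivative (\<lambda>s. gf x \<bullet> (s *\<^sub>R (y - x)))) (at 0)"
      by (simp add: g_def[abs_def] o_def)
    then show ?thesis
      unfolding has_field_derivative_def by (rule has_derivative_eq_rhs) (auto simp: algebra_simps)
  qed
  ultimately have "gf x \<bullet> (y - x) * (1 - 0) \<le> g 1 - g 0"
    by (intro convex_on_imp_above_tangent[of UNIV]) auto
  then show ?thesis
    by (simp add: g_def)
qed

lemma convex_on_gradient_monotone:
  fixes f :: "'a::real_inner \<Rightarrow> real"
  assumes "convex_on UNIV f" "\<And>x. (f has_derivative (\<lambda>h. gf x \<bullet> h)) (at x)"
  shows "0 \<le> (gf x - gf y) \<bullet> (x - y)"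
  using convex_on_gradient_inequality[OF assms, of x y] convex_on_gradient_inequality[OF assms, of y x]
  by (simp add: inner_diff_left inner_diff_right inner_commute)

lemma opT_monotone:
  fixes A :: "'a::real_inner \<Rightarrow> 'b::real_inner"
  assumes "convex_on UNIV f" "\<And>x. (f has_derivative (\<lambda>h. gf x \<bullet> h)) (at x)"
    and A: "linear A" and adj: "\<And>x y. A x \<bullet> y = x \<bullet> Astar y"
  shows "0 \<le> (opT gf Astar A b p - opT gf Astar A b q) \<bullet> (p - q)"
proof -
  obtain x l x' l' where pq: "p = (x, l)" "q = (x', l')"
    by fastforce
  have adj': "Astar m \<bullet> v = A v \<bullet> m" for m v
    using adj by (simp add: inner_commute)
  have "(Astar l - Astar l') \<bullet> (x - x') = (A x - A x') \<bullet> (l - l')"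
    by (simp add: inner_diff_left inner_diff_right adj')
  then have "(opT gf Astar A b p - opT gf Astar A b q) \<bullet> (p - q) = (gf x - gf x') \<bullet> (x - x')"
    by (simp add: pq opT_def inner_diff_left inner_diff_right inner_commute algebra_simps)
  then show ?thesis
    using convex_on_gradient_monotone[OF assms(1,2)] by simp
qed

lemma opT_saddle_point:
  fixes A :: "'a::real_inner \<Rightarrow> 'b::real_inner"
  assumes grad: "\<And>x. (f has_derivative (\<lambda>h. gf x \<bullet> h)) (at x)"
    and A: "bounded_linear A" and adj: "\<And>x y. A x \<bullet> y = x \<bullet> Astar y"
    and saddle: "(x, l) \<in> saddle_points f A b"
  shows "opT gf Astar A b (x, l) = 0"
proof -
  have max: "lagr f A b x m \<le> lagr f A b x l" and min: "lagr f A b x l \<le> lagr f A b y l" for y m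
    using saddle by (auto simp: saddle_points_def)
  have "(A x - b) \<bullet> (A x - b) \<le> 0"
    using max[of "l + (A x - b)"] by (simp add: lagr_def inner_add_left)
  then have feasible: "A x = b"
    by (metis antisym inner_ge_zero inner_eq_zero_iff right_minus_eq)
  have "((\<lambda>y. lagr f A b y l) has_derivative (\<lambda>h. gf x \<bullet> h + l \<bullet> A h)) (at x)"
    unfolding lagr_def
    by (auto intro!: derivative_eq_intros grad bounded_linear.has_derivative[OF A])
  then have "(\<lambda>h. gf x \<bullet> h + l \<bullet> A h) = (\<lambda>h. 0)"
    using min differential_zero_maxmin[of x UNIV "\<lambda>y. lagr f A b y l"] by auto
  then have "gf x \<bullet> (gf x + Astar l) + l \<bullet> A (gf x + Astar l) = 0"
    by metis
  then have "(gf x + Astar l) \<bullet> (gf x + Astar l) = 0"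
    by (metis adj inner_add_left inner_commute)
  then show ?thesis
    using feasible by (simp add: opT_def zero_prod_def)
qed

locale tikhonov_flow =
  fixes T :: "'a::real_inner \<Rightarrow> 'a" and eps :: "real \<Rightarrow> real"
    and z z' :: "real \<Rightarrow> 'a" and t0 :: real
  assumes monotone: "\<And>p q. 0 \<le> (T p - T q) \<bullet> (p - q)"
    and zero_exists: "\<exists>q. T q = 0"
    and eps_pos: "\<And>t. t0 \<le> t \<Longrightarrow> 0 < eps t"
    and eps_cont: "continuous_on {t0..} eps"
    and z_deriv: "\<And>t. t0 \<le> t \<Longrightarrow> (z has_vector_derivative z' t) (at t within {t0..})"
    and flow: "\<And>t. t0 \<le> t \<Longrightarrow> z' t + T (z t) + eps t *\<^sub>R z t = 0"
begin

definition rho :: "real \<Rightarrow> real" where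
  "rho t = integral {t0..t} eps"

lemma z_cont: "continuous_on {t0..} z"
  using z_deriv has_vector_derivative_continuous continuous_on_eq_continuous_within
  by (metis atLeast_iff)

lemma rho_deriv: "t0 \<le> t \<Longrightarrow> (rho has_real_derivative eps t) (at t within {t0..})"
  unfolding rho_def[abs_def] by (rule integral_has_real_derivative_atLeast[OF eps_cont])

lemma rho_mono:
  assumes "t0 \<le> s" "s \<le> t"
  shows "rho s \<le> rho t"
proof -
  have "- rho t \<le> - rho s"
  proof (rule DERIV_nonpos_imp_decreasing_within[OF assms(2), where S = "{t0..}"])
    show "{s..t} \<subseteq> {t0..}"
      using assms by auto
    fix x assume "x \<in> {s..t}"
    then show "((\<lambda>r. - rho r) has_real_derivative - eps x) (at x within {t0..})"
      using assms by (auto intro!: derivative_eq_intros rho_deriv)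
  next
    fix x assume "s < x"
    then show "- eps x \<le> 0"
      using assms eps_pos[of x] by simp
  qed
  then show ?thesis
    by simp
qed

lemma rho_nonneg: "t0 \<le> t \<Longrightarrow> 0 \<le> rho t"
  using rho_mono[of t0 t] by (simp add: rho_def)

lemma velocity_eq: "t0 \<le> t \<Longrightarrow> z' t = - T (z t) - eps t *\<^sub>R z t"
  using flow[of t] by (simp add: algebra_simps eq_neg_iff_add_eq_0)

lemma velocity_residual_eq:
  assumes "t0 \<le> t" "T w + eps t *\<^sub>R w = 0"
  shows "z' t + eps t *\<^sub>R (z t - w) = - (T (z t) - T w)"
proof -
  have "T w = - eps t *\<^sub>R w"
    using assms(2) by (simp add: eq_neg_iff_add_eq_0)
  then show ?thesis
    using velocity_eq[OF assms(1)] by (simp add: algebra_simps)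
qed

lemma operator_residual_le_velocity:
  assumes "t0 \<le> t" "T w + eps t *\<^sub>R w = 0"
  shows "norm (T (z t) - T w) \<le> norm (z' t)"
proof -
  have "norm (T (z t) - T w) \<le> norm (T (z t) - T w + eps t *\<^sub>R (z t - w))"
    using monotone eps_pos[OF assms(1)] by (intro norm_le_norm_add_scaleR) auto
  also have "T (z t) - T w + eps t *\<^sub>R (z t - w) = - z' t"
    using velocity_residual_eq[OF assms] by (simp add: algebra_simps)
  finally show ?thesis
    by simp
qed

lemma velocity_residual_le_velocity:
  assumes "t0 \<le> t" "T w + eps t *\<^sub>R w = 0"
  shows "norm (z' t + eps t *\<^sub>R (z t - w)) \<le> norm (z' t)"
  using operator_residual_le_velocity[OF assms] unfolding velocity_residual_eq[OF assms]
  by (simp only: norm_minus_cancel)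

lemma weighted_distance_to_zero_decreasing:
  assumes q: "T q = 0" and t: "t0 \<le> t"
  shows "exp (rho t) * ((z t - q) \<bullet> (z t - q) - q \<bullet> q) \<le> (z t0 - q) \<bullet> (z t0 - q) - q \<bullet> q"
proof -
  define V where "V t = (z t - q) \<bullet> (z t - q) - q \<bullet> q" for t
  have "exp (rho t) * V t \<le> exp (rho t0) * V t0"
  proof (rule exp_weighted_decreasing[OF t, where S = "{t0..}"])
    show "{t0..t} \<subseteq> {t0..}"
      by auto
    fix x assume x: "x \<in> {t0..t}"
    show "(V has_real_derivative 2 * ((z x - q) \<bullet> z' x)) (at x within {t0..})"
      unfolding V_def[abs_def] using x
      by (auto intro!: derivative_eq_intros has_real_derivative_inner_self z_deriv)
    show "(rho has_real_derivative eps x) (at x within {t0..})"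
      using x by (auto intro: rho_deriv)
  next
    fix x assume x: "t0 < x" "x < t"
    let ?p = "z x - q"
    have z': "z' x = - (T (z x) - T q) - eps x *\<^sub>R z x"
      using velocity_eq[of x] x q by simp
    have "2 * (?p \<bullet> z' x) = - 2 * ((T (z x) - T q) \<bullet> ?p) - eps x * (2 * (?p \<bullet> z x))"
      unfolding z' by (simp add: inner_diff_left inner_diff_right inner_commute algebra_simps)
    also have "2 * (?p \<bullet> z x) = ?p \<bullet> ?p + z x \<bullet> z x - q \<bullet> q"
      by (simp add: inner_diff_left inner_diff_right inner_commute)
    finally have "2 * (?p \<bullet> z' x) + eps x * V x = - 2 * ((T (z x) - T q) \<bullet> ?p) - eps x * (z x \<bullet> z x)"
      by (simp add: V_def algebra_simps)
    also have "\<dots> \<le> 0"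
      using monotone[of "z x" q] eps_pos[of x] x inner_ge_zero[of "z x"]
      by (smt (verit) mult_nonneg_nonneg)
    finally show "2 * (?p \<bullet> z' x) + eps x * V x \<le> 0" .
  qed
  then show ?thesis
    by (simp add: V_def rho_def)
qed

lemma bounded_trajectory: "bounded (z ` {t0..})"
proof -
  obtain q where q: "T q = 0"
    using zero_exists by blast
  define V where "V t = (z t - q) \<bullet> (z t - q) - q \<bullet> q" for t
  have V_le: "V t \<le> max (V t0) 0" if t: "t0 \<le> t" for t
  proof -
    have "exp (rho t) * V t \<le> V t0"
      unfolding V_def by (rule weighted_distance_to_zero_decreasing[OF q t])
    moreover have "V t \<le> exp (rho t) * V t" if "0 \<le> V t"
      using mult_right_mono[of 1 "exp (rho t)" "V t"] rho_nonneg[OF t] that by simp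
    ultimately show ?thesis
      by force
  qed
  have "norm (z t - q) \<le> sqrt (max (V t0) 0 + q \<bullet> q)" if "t0 \<le> t" for t
    using V_le[OF that] by (simp add: V_def norm_eq_sqrt_inner)
  then have "z ` {t0..} \<subseteq> cball q (sqrt (max (V t0) 0 + q \<bullet> q))"
    by (auto simp: dist_norm norm_minus_commute)
  then show ?thesis
    using bounded_cball bounded_subset by blast
qed

lemma trajectory_sq_bounded:
  obtains B where "\<And>t. t0 \<le> t \<Longrightarrow> z t \<bullet> z t \<le> B"
proof -
  obtain r where "\<And>t. t0 \<le> t \<Longrightarrow> norm (z t) \<le> r"
    using bounded_trajectory unfolding bounded_iff by auto
  then have "z t \<bullet> z t \<le> r\<^sup>2" if "t0 \<le> t" for t
    using power_mono[OF _ norm_ge_zero] that by (metis power2_norm_eq_inner)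
  then show ?thesis
    using that by blast
qed

lemma exp_rho_has_integral:
  assumes "t0 \<le> a" "a \<le> t"
  shows "((\<lambda>\<tau>. exp (rho \<tau>) * eps \<tau>) has_integral exp (rho t) - exp (rho a)) {a..t}"
proof (rule fundamental_theorem_of_calculus[OF assms(2)])
  fix x assume "x \<in> {a..t}"
  then have "((\<lambda>r. exp (rho r)) has_real_derivative exp (rho x) * eps x) (at x within {t0..})"
    using assms(1) by (auto intro!: derivative_eq_intros rho_deriv)
  then show "((\<lambda>r. exp (rho r)) has_vector_derivative exp (rho x) * eps x) (at x within {a..t})"
    using assms(1) by (auto simp: has_real_derivative_iff_has_vector_derivative
        intro: has_vector_derivative_within_subset)
qed

lemma weighted_integral_le:
  assumes "t0 \<le> a" "a \<le> t" "0 \<le> C"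
    and g: "\<And>\<tau>. a \<le> \<tau> \<Longrightarrow> g \<tau> \<le> C * (eps \<tau>)\<^sup>2"
  shows "exp (- rho t) * integral {a..t} (\<lambda>\<tau>. exp (rho \<tau>) * (1 / eps \<tau>) * g \<tau>) \<le> C"
proof -
  let ?f = "\<lambda>\<tau>. exp (rho \<tau>) * (1 / eps \<tau>) * g \<tau>"
  have f_le: "?f \<tau> \<le> C * (exp (rho \<tau>) * eps \<tau>)" if "\<tau> \<in> {a..t}" for \<tau>
  proof -
    have "0 < eps \<tau>"
      using that assms(1) eps_pos by simp
    then have "?f \<tau> \<le> exp (rho \<tau>) * (1 / eps \<tau>) * (C * (eps \<tau>)\<^sup>2)"
      using g that by (intro mult_left_mono) auto
    then show ?thesis
      using \<open>0 < eps \<tau>\<close> by (simp add: power2_eq_square algebra_simps)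
  qed
  have ftc: "((\<lambda>\<tau>. C * (exp (rho \<tau>) * eps \<tau>)) has_integral C * (exp (rho t) - exp (rho a))) {a..t}"
    by (rule has_integral_mult_right[OF exp_rho_has_integral[OF assms(1,2)]])
  have "integral {a..t} ?f \<le> C * (exp (rho t) - exp (rho a))"
  \<comment> \<open>\<open>g\<close> need not be measurable; a non-integrable integrand has integral \<open>0\<close>\<close>
  proof (cases "?f integrable_on {a..t}")
    case True
    have "integral {a..t} ?f \<le> integral {a..t} (\<lambda>\<tau>. C * (exp (rho \<tau>) * eps \<tau>))"
      by (rule integral_le[OF True has_integral_integrable[OF ftc] f_le])
    also have "\<dots> = C * (exp (rho t) - exp (rho a))"
      by (rule integral_unique[OF ftc])
    finally show ?thesis .
  next
    case False
    then show ?thesis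
      using rho_mono[of a t] assms by (simp add: not_integrable_integral)
  qed
  also have "\<dots> \<le> C * exp (rho t)"
    using assms(3) by (simp add: mult_left_mono)
  finally show ?thesis
    by (simp add: exp_minus field_simps)
qed

end

locale slowly_vanishing_tikhonov_flow = tikhonov_flow +
  fixes eps' eps'' :: "real \<Rightarrow> real" and tp :: real
  assumes eps_deriv: "\<And>t. t0 \<le> t \<Longrightarrow> (eps has_real_derivative eps' t) (at t within {t0..})"
    and eps'_deriv: "\<And>t. t0 \<le> t \<Longrightarrow> (eps' has_real_derivative eps'' t) (at t within {t0..})"
    and z'_cont: "continuous_on {t0..} z'"
    and eps_decreasing: "\<And>s t. t0 \<le> s \<Longrightarrow> s \<le> t \<Longrightarrow> eps t \<le> eps s"
    and tp_ge: "t0 \<le> tp"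
    and eps_sq_add_deriv_nonneg: "\<And>t. tp \<le> t \<Longrightarrow> 0 \<le> (eps t)\<^sup>2 + eps' t"
    and eps_sq_add_deriv_deriv_nonpos: "\<And>t. tp \<le> t \<Longrightarrow> 2 * eps t * eps' t + eps'' t \<le> 0"
begin

lemma eps_exp_rho_mono:
  assumes "tp \<le> s" "s \<le> t"
  shows "eps s * exp (rho s) \<le> eps t * exp (rho t)"
proof -
  have "exp (rho t) * - eps t \<le> exp (rho s) * - eps s"
  proof (rule exp_weighted_decreasing[OF assms(2), where S = "{t0..}"])
    show "{s..t} \<subseteq> {t0..}"
      using assms tp_ge by auto
    fix x assume "x \<in> {s..t}"
    then show "((\<lambda>r. - eps r) has_real_derivative - eps' x) (at x within {t0..})"
      and "(rho has_real_derivative eps x) (at x within {t0..})"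
      using assms tp_ge by (auto intro!: derivative_eq_intros eps_deriv rho_deriv)
  next
    fix x assume "s < x"
    then show "- eps' x + eps x * - eps x \<le> 0"
      using eps_sq_add_deriv_nonneg[of x] assms by (simp add: power2_eq_square)
  qed
  then show ?thesis
    by (simp add: mult.commute)
qed

lemma eps_sq_add_deriv_decreasing:
  assumes "tp \<le> s" "s \<le> t"
  shows "(eps t)\<^sup>2 + eps' t \<le> (eps s)\<^sup>2 + eps' s"
proof (rule DERIV_nonpos_imp_decreasing_within[OF assms(2), where S = "{t0..}"])
  show "{s..t} \<subseteq> {t0..}"
    using assms tp_ge by auto
  fix x assume "x \<in> {s..t}"
  then show "((\<lambda>r. (eps r)\<^sup>2 + eps' r) has_real_derivative 2 * eps x * eps' x + eps'' x) (at x within {t0..})"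
    using assms tp_ge by (auto intro!: derivative_eq_intros eps_deriv eps'_deriv)
next
  fix x assume "s < x"
  then show "2 * eps x * eps' x + eps'' x \<le> 0"
    using eps_sq_add_deriv_deriv_nonpos[of x] assms by simp
qed

lemma eps_decrement_le:
  assumes "tp \<le> t" "0 \<le> h"
  shows "eps t - eps (t + h) \<le> h * (eps t)\<^sup>2"
proof -
  have "- eps (t + h) - (eps t)\<^sup>2 * (t + h) \<le> - eps t - (eps t)\<^sup>2 * t"
  proof (rule DERIV_nonpos_imp_decreasing_within[where S = "{t0..}" and f = "\<lambda>r. - eps r - (eps t)\<^sup>2 * r"])
    show "t \<le> t + h" "{t..t + h} \<subseteq> {t0..}"
      using assms tp_ge by auto
    fix x assume "x \<in> {t..t + h}"
    then show "((\<lambda>r. - eps r - (eps t)\<^sup>2 * r) has_real_derivative - eps' x - (eps t)\<^sup>2) (at x within {t0..})"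
      using assms tp_ge by (auto intro!: derivative_eq_intros eps_deriv)
  next
    fix x assume x: "t < x"
    then have "eps x \<le> eps t" "0 < eps x"
      using eps_decreasing[of t x] eps_pos[of x] assms tp_ge by auto
    then have "(eps x)\<^sup>2 \<le> (eps t)\<^sup>2"
      by (simp add: power_mono)
    then show "- eps' x - (eps t)\<^sup>2 \<le> 0"
      using eps_sq_add_deriv_nonneg[of x] x assms by simp
  qed
  then show ?thesis
    by (simp add: algebra_simps)
qed

definition zsq_int :: "real \<Rightarrow> real" where
  "zsq_int t = integral {t0..t} (\<lambda>s. z s \<bullet> z s)"

lemma zsq_int_deriv: "t0 \<le> t \<Longrightarrow> (zsq_int has_real_derivative z t \<bullet> z t) (at t within {t0..})"
  unfolding zsq_int_def[abs_def]
  by (rule integral_has_real_derivative_atLeast) (auto intro!: continuous_intros z_cont)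

lemma zsq_int_increment_le:
  assumes "t0 \<le> t" "0 \<le> h" and B: "\<And>s. t0 \<le> s \<Longrightarrow> z s \<bullet> z s \<le> B"
  shows "zsq_int (t + h) - zsq_int t \<le> h * B"
proof -
  have "zsq_int (t + h) - B * (t + h) \<le> zsq_int t - B * t"
  proof (rule DERIV_nonpos_imp_decreasing_within[where S = "{t0..}" and f = "\<lambda>r. zsq_int r - B * r"])
    show "t \<le> t + h" "{t..t + h} \<subseteq> {t0..}"
      using assms by auto
    fix x assume "x \<in> {t..t + h}"
    then show "((\<lambda>r. zsq_int r - B * r) has_real_derivative z x \<bullet> z x - B) (at x within {t0..})"
      using assms by (auto intro!: derivative_eq_intros zsq_int_deriv)
  qed (use assms in auto)
  then show ?thesis
    by (simp add: algebra_simps)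
qed

lemma zsq_int_mono:
  assumes "t0 \<le> s" "s \<le> t"
  shows "zsq_int s \<le> zsq_int t"
proof -
  have "- zsq_int t \<le> - zsq_int s"
  proof (rule DERIV_nonpos_imp_decreasing_within[OF assms(2), where S = "{t0..}"])
    show "{s..t} \<subseteq> {t0..}"
      using assms by auto
    fix x assume "x \<in> {s..t}"
    then show "((\<lambda>r. - zsq_int r) has_real_derivative - (z x \<bullet> z x)) (at x within {t0..})"
      using assms by (auto intro!: derivative_eq_intros zsq_int_deriv)
  qed simp
  then show ?thesis
    by simp
qed

definition increment_energy :: "real \<Rightarrow> real \<Rightarrow> real" where
  "increment_energy h r = (z (r + h) - z r) \<bullet> (z (r + h) - z r)
     + (eps (r + h) - eps r) * (zsq_int (r + h) - zsq_int r)"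

lemma increment_energy_dissipation:
  assumes "0 \<le> h" "tp \<le> x"
  shows "2 * ((z (x + h) - z x) \<bullet> (z' (x + h) - z' x))
      + (eps' (x + h) - eps' x) * (zsq_int (x + h) - zsq_int x)
      + (eps (x + h) - eps x) * (z (x + h) \<bullet> z (x + h) - z x \<bullet> z x)
      + (eps x + eps (x + h)) * increment_energy h x \<le> 0"
    (is "?lhs \<le> 0")
proof -
  let ?a = "eps x" and ?b = "eps (x + h)" and ?X = "z x" and ?Y = "z (x + h)"
  let ?J = "zsq_int (x + h) - zsq_int x"
  have x0: "t0 \<le> x" "t0 \<le> x + h"
    using assms tp_ge by auto
  have "z' (x + h) - z' x = - (T ?Y - T ?X) - (?b *\<^sub>R ?Y - ?a *\<^sub>R ?X)"
    using velocity_eq[OF x0(1)] velocity_eq[OF x0(2)] by simp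
  then have "2 * ((?Y - ?X) \<bullet> (z' (x + h) - z' x))
      = - 2 * ((T ?Y - T ?X) \<bullet> (?Y - ?X)) - 2 * ((?Y - ?X) \<bullet> (?b *\<^sub>R ?Y - ?a *\<^sub>R ?X))"
    by (simp add: inner_diff_right inner_commute)
  also have "\<dots> \<le> - ((?a + ?b) * ((?Y - ?X) \<bullet> (?Y - ?X)) + (?b - ?a) * (?Y \<bullet> ?Y - ?X \<bullet> ?X))"
    using monotone[of ?Y ?X] inner_diff_scaleR_diff[where x = ?X and y = ?Y and a = ?a and b = ?b] by linarith
  finally have dissipation: "2 * ((?Y - ?X) \<bullet> (z' (x + h) - z' x))
      \<le> - ((?a + ?b) * ((?Y - ?X) \<bullet> (?Y - ?X)) + (?b - ?a) * (?Y \<bullet> ?Y - ?X \<bullet> ?X))" .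
  have "?lhs - ?J * ((?b\<^sup>2 + eps' (x + h)) - (?a\<^sup>2 + eps' x))
      = 2 * ((?Y - ?X) \<bullet> (z' (x + h) - z' x))
        + ((?a + ?b) * ((?Y - ?X) \<bullet> (?Y - ?X)) + (?b - ?a) * (?Y \<bullet> ?Y - ?X \<bullet> ?X))"
    by (simp add: increment_energy_def power2_eq_square algebra_simps)
  moreover have "?J * ((?b\<^sup>2 + eps' (x + h)) - (?a\<^sup>2 + eps' x)) \<le> 0"
    using zsq_int_mono[of x "x + h"] eps_sq_add_deriv_decreasing[of x "x + h"] assms x0
    by (intro mult_nonneg_nonpos) auto
  ultimately show ?thesis
    using dissipation by linarith
qed

lemma weighted_increment_energy_decreasing:
  assumes "0 \<le> h" "tp \<le> s" "s \<le> t"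
  shows "exp (rho t + rho (t + h)) * increment_energy h t
    \<le> exp (rho s + rho (s + h)) * increment_energy h s"
proof (rule exp_weighted_decreasing[OF assms(3), where S = "{t0..}"])
  show "{s..t} \<subseteq> {t0..}"
    using assms tp_ge by auto
  fix x assume "x \<in> {s..t}"
  then have x0: "t0 \<le> x" "t0 \<le> x + h"
    using assms tp_ge by auto
  have shift: "((\<lambda>r. g (r + h)) has_real_derivative g' (x + h)) (at x within {t0..})"
    if "\<And>r. t0 \<le> r \<Longrightarrow> (g has_real_derivative g' r) (at r within {t0..})" for g g'
    using has_real_derivative_shift_within[OF that[OF x0(2)] assms(1)] .
  have "((\<lambda>r. z (r + h)) has_vector_derivative z' (x + h)) (at x within {t0..})"
    using has_vector_derivative_shift_within[OF z_deriv[OF x0(2)] assms(1)] .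
  then have "((\<lambda>r. z (r + h) - z r) has_vector_derivative z' (x + h) - z' x) (at x within {t0..})"
    using z_deriv[OF x0(1)] by (rule has_vector_derivative_diff)
  note D = has_real_derivative_inner_self[OF this]
  have E: "((\<lambda>r. eps (r + h) - eps r) has_real_derivative eps' (x + h) - eps' x) (at x within {t0..})"
    using x0 by (intro DERIV_diff shift eps_deriv)
  have J: "((\<lambda>r. zsq_int (r + h) - zsq_int r) has_real_derivative
      z (x + h) \<bullet> z (x + h) - z x \<bullet> z x) (at x within {t0..})"
    using x0 by (intro DERIV_diff shift zsq_int_deriv)
  show "(increment_energy h has_real_derivative
      2 * ((z (x + h) - z x) \<bullet> (z' (x + h) - z' x))
      + (eps' (x + h) - eps' x) * (zsq_int (x + h) - zsq_int x)
      + (eps (x + h) - eps x) * (z (x + h) \<bullet> z (x + h) - z x \<bullet> z x)) (at x within {t0..})"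
    unfolding increment_energy_def[abs_def]
    by (rule DERIV_cong[OF DERIV_add[OF D DERIV_mult[OF E J]]]) (simp add: algebra_simps)
  show "((\<lambda>r. rho r + rho (r + h)) has_real_derivative eps x + eps (x + h)) (at x within {t0..})"
    using x0 by (auto intro!: derivative_eq_intros shift rho_deriv)
next
  fix x assume "s < x"
  then show "2 * ((z (x + h) - z x) \<bullet> (z' (x + h) - z' x))
      + (eps' (x + h) - eps' x) * (zsq_int (x + h) - zsq_int x)
      + (eps (x + h) - eps x) * (z (x + h) \<bullet> z (x + h) - z x \<bullet> z x)
      + (eps x + eps (x + h)) * increment_energy h x \<le> 0"
    using increment_energy_dissipation assms by simp
qed

lemma trajectory_lipschitz_on:
  assumes "t0 \<le> a"
  obtains K where "0 \<le> K" "\<And>x y. x \<in> {a..b} \<Longrightarrow> y \<in> {a..b} \<Longrightarrow> norm (z x - z y) \<le> K * \<bar>x - y\<bar>"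
proof -
  have "compact (z' ` {a..b})"
    by (rule compact_continuous_image[OF continuous_on_subset[OF z'_cont]]) (use assms in auto)
  then obtain K where "0 < K" and K: "\<And>x. x \<in> {a..b} \<Longrightarrow> norm (z' x) \<le> K"
    using compact_imp_bounded bounded_pos by (metis imageI)
  have lip: "norm (z x - z y) \<le> K * norm (x - y)" if "x \<in> {a..b}" "y \<in> {a..b}" for x y
  proof (rule differentiable_bound[where f' = "\<lambda>x s. s *\<^sub>R z' x"])
    fix x assume x: "x \<in> {a..b}"
    then have "(z has_vector_derivative z' x) (at x within {a..b})"
      using assms by (auto intro: has_vector_derivative_within_subset[OF z_deriv])
    then show "(z has_derivative (\<lambda>s. s *\<^sub>R z' x)) (at x within {a..b})"
      by (simp add: has_vector_derivative_def)
    show "onorm (\<lambda>s. s *\<^sub>R z' x) \<le> K"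
      using K[OF x] onorm_scaleR_left[OF bounded_linear_ident, of "z' x"] by (simp add: onorm_id)
  qed (use that in auto)
  show ?thesis
    using \<open>0 < K\<close> lip by (intro that[of K]) auto
qed

lemma weighted_increment_energy_initial_le:
  obtains C where "0 \<le> C"
    "\<And>h. 0 < h \<Longrightarrow> h \<le> 1 \<Longrightarrow> exp (rho tp + rho (tp + h)) * increment_energy h tp \<le> C * h\<^sup>2"
proof -
  obtain K where "0 \<le> K"
    and K: "\<And>x y. x \<in> {tp..tp + 1} \<Longrightarrow> y \<in> {tp..tp + 1} \<Longrightarrow> norm (z x - z y) \<le> K * \<bar>x - y\<bar>"
    using trajectory_lipschitz_on[OF tp_ge] by blast
  show ?thesis
  proof (rule that[of "exp (2 * rho (tp + 1)) * K\<^sup>2"])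
    fix h :: real assume h: "0 < h" "h \<le> 1"
    have "(eps (tp + h) - eps tp) * (zsq_int (tp + h) - zsq_int tp) \<le> 0"
      using eps_decreasing[of tp "tp + h"] zsq_int_mono[of tp "tp + h"] tp_ge h
      by (intro mult_nonpos_nonneg) auto
    moreover have "norm (z (tp + h) - z tp) \<le> K * h"
      using K[of "tp + h" tp] h by simp
    then have "(norm (z (tp + h) - z tp))\<^sup>2 \<le> (K * h)\<^sup>2"
      by (simp add: power_mono)
    ultimately have "increment_energy h tp \<le> (K * h)\<^sup>2"
      by (simp add: increment_energy_def power2_norm_eq_inner)
    moreover have "exp (rho tp + rho (tp + h)) \<le> exp (2 * rho (tp + 1))"
      using rho_mono[of tp "tp + 1"] rho_mono[of "tp + h" "tp + 1"] tp_ge h by simp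
    ultimately have "exp (rho tp + rho (tp + h)) * increment_energy h tp
        \<le> exp (2 * rho (tp + 1)) * (K * h)\<^sup>2"
      by (meson exp_gt_zero mult_left_mono mult_right_mono order.trans less_imp_le zero_le_power2)
    then show "exp (rho tp + rho (tp + h)) * increment_energy h tp \<le> exp (2 * rho (tp + 1)) * K\<^sup>2 * h\<^sup>2"
      by (simp add: power_mult_distrib)
  qed simp
qed

lemma increment_energy_lower_bound:
  assumes "tp \<le> t" "0 \<le> h" and B: "\<And>s. t0 \<le> s \<Longrightarrow> z s \<bullet> z s \<le> B"
  shows "(norm (z (t + h) - z t))\<^sup>2 - h\<^sup>2 * (B * (eps t)\<^sup>2) \<le> increment_energy h t"
proof -
  have "(eps t - eps (t + h)) * (zsq_int (t + h) - zsq_int t) \<le> (h * (eps t)\<^sup>2) * (h * B)"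
    using eps_decrement_le[of t h] eps_decreasing[of t "t + h"] zsq_int_mono[of t "t + h"]
      zsq_int_increment_le[of t h B] B assms(1,2) tp_ge
    by (intro mult_mono) auto
  also have "\<dots> = h\<^sup>2 * (B * (eps t)\<^sup>2)"
    by (simp add: power2_eq_square)
  finally show ?thesis
    unfolding increment_energy_def power2_norm_eq_inner by (simp add: algebra_simps)
qed

lemma increment_sq_le:
  obtains C B where "0 \<le> C" "0 \<le> B"
    "\<And>t h. tp \<le> t \<Longrightarrow> 0 < h \<Longrightarrow> h \<le> 1 \<Longrightarrow>
      (norm (z (t + h) - z t))\<^sup>2 \<le> h\<^sup>2 * (C * exp (- 2 * rho t) + B * (eps t)\<^sup>2)"
proof -
  obtain B where B: "\<And>t. t0 \<le> t \<Longrightarrow> z t \<bullet> z t \<le> B"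
    using trajectory_sq_bounded by blast
  obtain C where "0 \<le> C"
    and initial: "\<And>h. 0 < h \<Longrightarrow> h \<le> 1 \<Longrightarrow> exp (rho tp + rho (tp + h)) * increment_energy h tp \<le> C * h\<^sup>2"
    using weighted_increment_energy_initial_le by blast
  show ?thesis
  proof (rule that[of C B])
    show "0 \<le> C" "0 \<le> B"
      using \<open>0 \<le> C\<close> B[of t0] inner_ge_zero[of "z t0"] by linarith+
    fix t h :: real assume t: "tp \<le> t" and h: "0 < h" "h \<le> 1"
    have "exp (rho t + rho (t + h)) * increment_energy h t \<le> C * h\<^sup>2"
      using order.trans[OF weighted_increment_energy_decreasing[of h tp t] initial] t h by simp
    then have "increment_energy h t \<le> C * h\<^sup>2 / exp (rho t + rho (t + h))"
      by (simp add: pos_le_divide_eq mult.commute)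
    also have "\<dots> = C * h\<^sup>2 * exp (- (rho t + rho (t + h)))"
      by (simp only: exp_minus divide_inverse)
    also have "\<dots> \<le> C * h\<^sup>2 * exp (- 2 * rho t)"
      using rho_mono[of t "t + h"] t tp_ge h \<open>0 \<le> C\<close> by (intro mult_left_mono) auto
    finally show "(norm (z (t + h) - z t))\<^sup>2 \<le> h\<^sup>2 * (C * exp (- 2 * rho t) + B * (eps t)\<^sup>2)"
      using increment_energy_lower_bound[OF t less_imp_le[OF h(1)] B] by (simp add: algebra_simps)
  qed
qed

lemma exp_neg_rho_le:
  assumes "tp \<le> t"
  shows "exp (- rho t) \<le> eps t / (eps tp * exp (rho tp))"
proof -
  have "0 < eps tp * exp (rho tp)"
    using eps_pos[OF tp_ge] by simp
  then show ?thesis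
    using eps_exp_rho_mono[OF order_refl assms] by (simp add: exp_minus field_simps)
qed

lemma velocity_sq_le:
  obtains C where "0 \<le> C" "\<And>t. tp \<le> t \<Longrightarrow> (norm (z' t))\<^sup>2 \<le> C * (eps t)\<^sup>2"
proof -
  obtain C B where "0 \<le> C" "0 \<le> B"
    and incr: "\<And>t h. tp \<le> t \<Longrightarrow> 0 < h \<Longrightarrow> h \<le> 1 \<Longrightarrow>
      (norm (z (t + h) - z t))\<^sup>2 \<le> h\<^sup>2 * (C * exp (- 2 * rho t) + B * (eps t)\<^sup>2)"
    using increment_sq_le by blast
  define c where "c = eps tp * exp (rho tp)"
  show ?thesis
  proof (rule that[of "C / c\<^sup>2 + B"])
    show "0 \<le> C / c\<^sup>2 + B"
      using \<open>0 \<le> C\<close> \<open>0 \<le> B\<close> by simp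
    fix t assume t: "tp \<le> t"
    let ?M = "C * exp (- 2 * rho t) + B * (eps t)\<^sup>2"
    have "norm (z' t) \<le> sqrt ?M"
    proof (rule norm_vector_derivative_le_increments)
      show "(z has_vector_derivative z' t) (at t within {t<..})"
        using z_deriv[of t] t tp_ge by (auto intro: has_vector_derivative_within_subset)
      fix h :: real assume "0 < h" "h \<le> 1"
      then have "norm (z (t + h) - z t) \<le> sqrt (h\<^sup>2 * ?M)"
        using incr[OF t] by (simp add: real_le_rsqrt)
      then show "norm (z (t + h) - z t) \<le> h * sqrt ?M"
        using \<open>0 < h\<close> by (simp add: real_sqrt_mult)
    qed
    then have "(norm (z' t))\<^sup>2 \<le> ?M"
      using \<open>0 \<le> C\<close> \<open>0 \<le> B\<close> by (metis norm_ge_zero power_mono real_sqrt_pow2 zero_le_mult_iff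
          add_nonneg_nonneg exp_ge_zero zero_le_power2)
    also have "exp (- 2 * rho t) \<le> (eps t)\<^sup>2 / c\<^sup>2"
      using power_mono[OF exp_neg_rho_le[OF t] exp_ge_zero, of 2]
      by (simp add: c_def power_divide flip: exp_of_nat_mult)
    then have "C * exp (- 2 * rho t) \<le> C * ((eps t)\<^sup>2 / c\<^sup>2)"
      using \<open>0 \<le> C\<close> by (rule mult_left_mono)
    then have "?M \<le> (C / c\<^sup>2 + B) * (eps t)\<^sup>2"
      by (simp add: algebra_simps)
    finally show "(norm (z' t))\<^sup>2 \<le> (C / c\<^sup>2 + B) * (eps t)\<^sup>2" .
  qed
qed

lemma weighted_integral_Limsup_finite:
  assumes "\<And>\<tau>. tp \<le> \<tau> \<Longrightarrow> norm (g \<tau>) \<le> norm (z' \<tau>)"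
  shows "Limsup at_top (\<lambda>t. ereal (exp (- rho t) *
      integral {tp..t} (\<lambda>\<tau>. exp (rho \<tau>) * (1 / eps \<tau>) * (norm (g \<tau>))\<^sup>2))) < \<infinity>"
proof -
  obtain C where "0 \<le> C" and C: "\<And>t. tp \<le> t \<Longrightarrow> (norm (z' t))\<^sup>2 \<le> C * (eps t)\<^sup>2"
    using velocity_sq_le by blast
  have g_le: "(norm (g \<tau>))\<^sup>2 \<le> C * (eps \<tau>)\<^sup>2" if "tp \<le> \<tau>" for \<tau>
    using power_mono[OF assms[OF that] norm_ge_zero, of 2] C[OF that] by linarith
  have "\<forall>\<^sub>F t in at_top. exp (- rho t) *
      integral {tp..t} (\<lambda>\<tau>. exp (rho \<tau>) * (1 / eps \<tau>) * (norm (g \<tau>))\<^sup>2) \<le> C"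
    using eventually_ge_at_top[of tp]
    by eventually_elim (rule weighted_integral_le[OF tp_ge _ \<open>0 \<le> C\<close> g_le])
  then show ?thesis
    by (rule Limsup_less_infinity_if_eventually_le)
qed

end

theorem proposition4p6:
  fixes f :: "'a::{real_inner,complete_space} \<Rightarrow> real"
    and gf :: "'a \<Rightarrow> 'a"
    and A :: "'a \<Rightarrow> 'b::{real_inner,complete_space}"
    and Astar :: "'b \<Rightarrow> 'a"
    and b :: 'b
    and eps eps' eps'' :: "real \<Rightarrow> real"
    and t0 tp :: real
    and z z' zt :: "real \<Rightarrow> 'a \<times> 'b"
  assumes f_convex: "convex_on UNIV f"
    and f_grad: "\<And>x. (f has_derivative (\<lambda>h. inner (gf x) h)) (at x)"
    and gf_cont: "continuous_on UNIV gf"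
    and gf_lip: "\<And>B. bounded B \<Longrightarrow> \<exists>L. \<forall>x\<in>B. \<forall>y\<in>B. norm (gf x - gf y) \<le> L * norm (x - y)"
    and A_lin: "bounded_linear A"
    and A_adj: "\<And>x y. inner (A x) y = inner x (Astar y)"
    and t0_nonneg: "t0 \<ge> 0"
    and eps_pos: "\<And>t. t \<ge> t0 \<Longrightarrow> eps t > 0"
    and eps_d1: "\<And>t. t \<ge> t0 \<Longrightarrow> (eps has_real_derivative eps' t) (at t within {t0..})"
    and eps_d2: "\<And>t. t \<ge> t0 \<Longrightarrow> (eps' has_real_derivative eps'' t) (at t within {t0..})"
    and eps''_cont: "continuous_on {t0..} eps''"
    and eps_lim: "(eps \<longlongrightarrow> 0) at_top"
    and SM_nonempty: "saddle_points f A b \<noteq> {}"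
    and z_deriv: "\<And>t. t \<ge> t0 \<Longrightarrow> (z has_vector_derivative z' t) (at t within {t0..})"
    and z'_cont: "continuous_on {t0..} z'"
    and AHT: "\<And>t. t \<ge> t0 \<Longrightarrow> z' t + opT gf Astar A b (z t) + eps t *\<^sub>R z t = 0"
    and zt_zero: "\<And>t. t \<ge> t0 \<Longrightarrow> opT gf Astar A b (zt t) + eps t *\<^sub>R zt t = 0"
    and eps_decr: "\<And>s t. t0 \<le> s \<Longrightarrow> s \<le> t \<Longrightarrow> eps t \<le> eps s"
    and tp_ge: "tp \<ge> t0"
    and cond1: "\<And>t. t \<ge> tp \<Longrightarrow> (eps t)\<^sup>2 + eps' t \<ge> 0"
    and cond2: "\<And>t. t \<ge> tp \<Longrightarrow> 2 * eps t * eps' t + eps'' t \<le> 0"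
  shows "Limsup at_top (\<lambda>t. ereal (exp (- integral {t0..t} eps) *
            integral {tp..t} (\<lambda>\<tau>. exp (integral {t0..\<tau>} eps) * (1 / eps \<tau>) *
              (norm (z' \<tau> + eps \<tau> *\<^sub>R (z \<tau> - zt \<tau>)))\<^sup>2))) < \<infinity>
    \<and> Limsup at_top (\<lambda>t. ereal (exp (- integral {t0..t} eps) *
            integral {tp..t} (\<lambda>\<tau>. exp (integral {t0..\<tau>} eps) * (1 / eps \<tau>) *
              (norm (opT gf Astar A b (z \<tau>) - opT gf Astar A b (zt \<tau>)))\<^sup>2))) < \<infinity>"
proof -
  let ?T = "opT gf Astar A b"
  interpret slowly_vanishing_tikhonov_flow ?T eps z z' t0 eps' eps'' tp
  proof unfold_locales
    show "0 \<le> (?T p - ?T q) \<bullet> (p - q)" for p q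
      by (rule opT_monotone[OF f_convex f_grad bounded_linear.linear[OF A_lin] A_adj])
    obtain x l where "(x, l) \<in> saddle_points f A b"
      using SM_nonempty by auto
    then show "\<exists>q. ?T q = 0"
      using opT_saddle_point[OF f_grad A_lin A_adj] by blast
    show "continuous_on {t0..} eps"
      using eps_d1 DERIV_continuous continuous_on_eq_continuous_within by (metis atLeast_iff)
  qed (fact eps_pos z_deriv AHT eps_d1 eps_d2 z'_cont eps_decr tp_ge cond1 cond2)+
  have velocity: "norm (z' \<tau> + eps \<tau> *\<^sub>R (z \<tau> - zt \<tau>)) \<le> norm (z' \<tau>)"
    and residual: "norm (?T (z \<tau>) - ?T (zt \<tau>)) \<le> norm (z' \<tau>)" if "tp \<le> \<tau>" for \<tau>
    using that tp_ge zt_zero[of \<tau>]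
    by (auto intro: velocity_residual_le_velocity operator_residual_le_velocity)
  show ?thesis
    using weighted_integral_Limsup_finite[OF velocity] weighted_integral_Limsup_finite[OF residual]
    unfolding rho_def by (rule conjI)
qed

end
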